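(* For Lebesgue almost every $x\in[0,1]$ and for every $i\in\mathbb{N}$, $$\limsup_{n\to\infty}N_i(x,n)<+\infty,$$ i.e. each symbol $i\in\mathbb{N}$ occurs only finitely many times among the $\bar O^1$-symbols of $x$.
   Context: Every irrational $x\in(0,1)$ has a unique representation ($\bar O^1$-expansion) $$x=\sum_{k=1}^\infty\frac{(-1)^{k-1}}{g_1(g_1+g_2)\cdots(g_1+g_2+\dots+g_k)},\qquad g_k=g_k(x)\in\mathbb{N}=\{1,2,3,\dots\}.$$ The $g_k(x)$ are the $\bar O^1$-symbols of $x$, and $N_i(x,n)$ is the number of indices $k\in\{1,\dots,n\}$ with $g_k(x)=i$. *)

theory Defs
  imports "HOL-Analysis.Analysis" "HOL-Library.Liminf_Limsup"
begin

text \<open>Symbol sequences are functions g :: nat => nat indexed from 1; we normalise g 0 = 0.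
  The k-th term of the expansion (k >= 1) is
  (-1)^(k-1) / (g 1 * (g 1 + g 2) * ... * (g 1 + ... + g k)).\<close>

definition ob1_term :: "(nat \<Rightarrow> nat) \<Rightarrow> nat \<Rightarrow> real" where
  "ob1_term g k = (-1) ^ (k - 1) / (\<Prod>j=1..k. real (\<Sum>i=1..j. g i))"

definition ob1_expansion :: "real \<Rightarrow> (nat \<Rightarrow> nat) \<Rightarrow> bool" where
  "ob1_expansion x g \<longleftrightarrow> g 0 = 0 \<and> (\<forall>k\<ge>1. g k \<ge> 1) \<and>
     ((\<lambda>k. ob1_term g (Suc k)) sums x)"

text \<open>The O-bar-1 symbols of x (meaningful for irrational x in (0,1), where the
  expansion exists and is unique).\<close>
definition ob1_symbols :: "real \<Rightarrow> nat \<Rightarrow> nat" where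
  "ob1_symbols x = (THE g. ob1_expansion x g)"

definition ob1_count :: "nat \<Rightarrow> real \<Rightarrow> nat \<Rightarrow> nat" where
  "ob1_count i x n = card {k \<in> {1..n}. ob1_symbols x k = i}"

end

theory Submission
  imports Defs
begin

text \<open>
  Write \<open>c\<^sub>k = g\<^sub>1 + \<dots> + g\<^sub>k\<^sub>+\<^sub>1\<close> for the partial sums of the symbols of \<open>x\<close>.
  They form the strictly increasing digit sequence produced by the map
  \<open>z \<mapsto> 1 - \<lfloor>1/z\<rfloor> z\<close>, and \<open>x = \<Sum>\<^sub>k (-1)\<^sup>k / (c\<^sub>0 \<cdots> c\<^sub>k)\<close>;
  the symbol \<open>g\<^sub>k\<^sub>+\<^sub>1\<close> equals \<open>i\<close> iff \<open>c\<^sub>k = c\<^sub>k\<^sub>-\<^sub>1 + i\<close>.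

  Given the previous digit \<open>q\<close>, the current tail is \<open>z = r/(q+1)\<close> with \<open>r \<in> (0,1)\<close>, and
  the next digit equals \<open>m\<close> exactly on an interval of \<open>r\<close> of length \<open>(q+1)/(m(m+1))\<close>,
  which an affine map carries onto \<open>(0,1)\<close>, the new state being \<open>(m, r')\<close>. Hence the set of
  \<open>r\<close> for which the \<open>k\<close>-th gap equals \<open>i\<close> has measure at most \<open>1/(2\<^sup>k (q+1))\<close>:
  the first step branches into digits \<open>m > q\<close>, and
  \<open>\<Sum>\<^sub>m\<^sub>>\<^sub>q (q+1)/(m(m+1)\<^sup>2) \<le> 1/(2(q+1))\<close> by telescoping
  \<open>1/(m(m+1)\<^sup>2) \<le> (1/m\<^sup>2 - 1/(m+1)\<^sup>2)/2\<close>.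
  These measures are summable in \<open>k\<close>, so by Borel--Cantelli almost every \<open>x\<close> has only
  finitely many symbols equal to \<open>i\<close>.
\<close>

section \<open>The digit sequence\<close>

definition ob1_digit :: "real \<Rightarrow> nat" where
  "ob1_digit z = nat \<lfloor>1 / z\<rfloor>"

fun ob1_tail :: "real \<Rightarrow> nat \<Rightarrow> real" where
  "ob1_tail x 0 = x"
| "ob1_tail x (Suc k) = 1 - real (ob1_digit (ob1_tail x k)) * ob1_tail x k"

definition ob1_digits :: "real \<Rightarrow> nat \<Rightarrow> nat" where
  "ob1_digits x k = ob1_digit (ob1_tail x k)"

lemma ob1_tail_Suc_shift: "ob1_tail x (Suc k) = ob1_tail (1 - real (ob1_digit x) * x) k"
  by (induction k) auto

lemma ob1_digits_Suc: "ob1_digits x (Suc k) = ob1_digits (1 - real (ob1_digit x) * x) k"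
  by (simp only: ob1_digits_def ob1_tail_Suc_shift)

lemma ob1_digit_bounds:
  assumes z: "0 < z" "z < 1" "z \<notin> \<rat>"
  shows "ob1_digit z \<ge> 1" and "real (ob1_digit z) < 1 / z" and "1 / z < real (ob1_digit z) + 1"
proof -
  have "1 / z \<notin> \<rat>"
    using z(3) Rats_divide[OF Rats_1, of "1 / z"] by auto
  then have ne: "real_of_int \<lfloor>1 / z\<rfloor> \<noteq> 1 / z"
    by (metis Rats_of_int)
  have "1 / z > 1"
    using z by (simp add: field_simps)
  then have fl: "\<lfloor>1 / z\<rfloor> \<ge> 1"
    by linarith
  have eq: "real (ob1_digit z) = real_of_int \<lfloor>1 / z\<rfloor>"
    unfolding ob1_digit_def by (rule of_nat_nat) (use fl in linarith)
  show "ob1_digit z \<ge> 1"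
    unfolding ob1_digit_def using fl by linarith
  show "real (ob1_digit z) < 1 / z" "1 / z < real (ob1_digit z) + 1"
    using ne eq by linarith+
qed

lemma ob1_step_bounds:
  assumes z: "0 < z" "z < 1" "z \<notin> \<rat>"
  defines "z' \<equiv> 1 - real (ob1_digit z) * z"
  shows "0 < z'" and "z' < 1 / (real (ob1_digit z) + 1)" and "z' \<notin> \<rat>"
proof -
  note b = ob1_digit_bounds[OF z]
  show "0 < z'"
    using b(2) z unfolding z'_def by (simp add: field_simps)
  have "1 < z * (real (ob1_digit z) + 1)"
    using b(3) z by (simp add: field_simps)
  then have "real (ob1_digit z) < real (ob1_digit z) * (z * (real (ob1_digit z) + 1))"
    using b(1) by simp
  then show "z' < 1 / (real (ob1_digit z) + 1)"
    unfolding z'_def by (simp add: field_simps)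
  show "z' \<notin> \<rat>"
  proof
    assume "z' \<in> \<rat>"
    then have "(1 - z') / real (ob1_digit z) \<in> \<rat>"
      by (intro Rats_divide Rats_diff) auto
    then show False
      using z(3) b(1) unfolding z'_def by simp
  qed
qed

lemma ob1_tail_bounds:
  assumes x: "0 < x" "x < 1" "x \<notin> \<rat>"
  shows "0 < ob1_tail x k \<and> ob1_tail x k < 1 \<and> ob1_tail x k \<notin> \<rat>"
proof (induction k)
  case (Suc k)
  then have "0 < ob1_tail x k" "ob1_tail x k < 1" "ob1_tail x k \<notin> \<rat>"
    by auto
  note b = ob1_step_bounds[OF this, folded ob1_tail.simps]
  have "1 / (real (ob1_digit (ob1_tail x k)) + 1) \<le> 1"
    by simp
  with b show ?case
    by (meson less_le_trans)
qed (use x in simp)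

lemma ob1_digits_strict_mono:
  assumes x: "0 < x" "x < 1" "x \<notin> \<rat>"
  shows "strict_mono (ob1_digits x)"
proof (unfold strict_mono_Suc_iff, intro allI)
  fix k
  let ?c = "ob1_digits x k"
  have z: "0 < ob1_tail x k" "ob1_tail x k < 1" "ob1_tail x k \<notin> \<rat>"
    using ob1_tail_bounds[OF x] by blast+
  have z': "0 < ob1_tail x (Suc k)" "ob1_tail x (Suc k) < 1" "ob1_tail x (Suc k) \<notin> \<rat>"
    using ob1_tail_bounds[OF x] by blast+
  have "ob1_tail x (Suc k) < 1 / (real ?c + 1)"
    using ob1_step_bounds(2)[OF z, folded ob1_tail.simps ob1_digits_def] .
  then have "real ?c + 1 < 1 / ob1_tail x (Suc k)"
    using z'(1) by (simp add: field_simps del: ob1_tail.simps)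
  also have "\<dots> < real (ob1_digits x (Suc k)) + 1"
    unfolding ob1_digits_def by (rule ob1_digit_bounds(3)[OF z'])
  finally show "?c < ob1_digits x (Suc k)"
    by simp
qed

definition admissible_digits :: "(nat \<Rightarrow> nat) \<Rightarrow> bool" where
  "admissible_digits c \<longleftrightarrow> c 0 \<ge> 1 \<and> strict_mono c"

lemma admissible_ob1_digits:
  assumes "0 < x" "x < 1" "x \<notin> \<rat>"
  shows "admissible_digits (ob1_digits x)"
  using ob1_digits_strict_mono[OF assms] ob1_digit_bounds(1)[OF assms]
  unfolding admissible_digits_def by (simp add: ob1_digits_def)

lemma admissible_digits_ge:
  assumes "admissible_digits c"
  shows "c j \<ge> Suc j"
proof -
  have mono: "strict_mono c" and c0: "c 0 \<ge> 1"
    using assms unfolding admissible_digits_def by auto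
  have "c j \<ge> c 0 + j"
  proof (induction j)
    case (Suc j)
    then show ?case
      using strict_monoD[OF mono, of j "Suc j"] by simp
  qed simp
  with c0 show ?thesis
    by simp
qed

lemma admissible_digits_prod_ge_1:
  assumes "admissible_digits c"
  shows "1 \<le> (\<Prod>i<n. real (c i))"
proof (rule prod_ge_1)
  show "1 \<le> real (c i)" for i
    using admissible_digits_ge[OF assms, of i] by linarith
qed

lemma admissible_digits_tl:
  assumes "admissible_digits c"
  shows "admissible_digits (\<lambda>j. c (Suc j))"
proof -
  have mono: "strict_mono c" and c0: "c 0 \<ge> 1"
    using assms unfolding admissible_digits_def by auto
  have "c 0 < c 1"
    using strict_monoD[OF mono] by simp
  with c0 have "c 1 \<ge> 1"
    by linarith
  with mono show ?thesis
    unfolding admissible_digits_def strict_mono_Suc_iff by simp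
qed

definition recip_prod :: "(nat \<Rightarrow> nat) \<Rightarrow> nat \<Rightarrow> real" where
  "recip_prod c k = 1 / (\<Prod>i<Suc k. real (c i))"

lemma recip_prod_Suc: "recip_prod c (Suc k) = recip_prod c k / real (c (Suc k))"
  unfolding recip_prod_def by simp

lemma recip_prod_bounds:
  assumes "admissible_digits c"
  shows "0 < recip_prod c k" and "recip_prod c k \<le> 1 / real (Suc k)"
proof -
  note ge1 = admissible_digits_prod_ge_1[OF assms, of k]
  then show "0 < recip_prod c k"
    unfolding recip_prod_def using admissible_digits_ge[OF assms, of k] by simp
  have "real (Suc k) \<le> real (c k)"
    using admissible_digits_ge[OF assms, of k] by linarith
  then have "1 * real (Suc k) \<le> (\<Prod>i<k. real (c i)) * real (c k)"
    using ge1 by (intro mult_mono) auto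
  then show "recip_prod c k \<le> 1 / real (Suc k)"
    unfolding recip_prod_def by (simp add: frac_le)
qed

lemma recip_prod_strict_decreasing:
  assumes "admissible_digits c"
  shows "recip_prod c (Suc k) < recip_prod c k"
proof -
  have "1 < real (c (Suc k))"
    using admissible_digits_ge[OF assms, of "Suc k"] by linarith
  with recip_prod_bounds(1)[OF assms, of k] show ?thesis
    unfolding recip_prod_Suc by (simp add: divide_less_eq)
qed

lemma recip_prod_tendsto_zero:
  assumes "admissible_digits c"
  shows "recip_prod c \<longlonglongrightarrow> 0"
proof (rule tendsto_sandwich)
  show "\<forall>\<^sub>F k in sequentially. 0 \<le> recip_prod c k"
    using recip_prod_bounds(1)[OF assms] by (simp add: less_imp_le)
  show "\<forall>\<^sub>F k in sequentially. recip_prod c k \<le> 1 / real (Suc k)"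
    using recip_prod_bounds(2)[OF assms] by simp
  show "(\<lambda>k. 1 / real (Suc k)) \<longlonglongrightarrow> 0"
    using LIMSEQ_inverse_real_of_nat by (simp add: inverse_eq_divide)
qed simp

lemma alternating_remainder_step:
  fixes c p s t :: real
  assumes "c > 0" and "p > 0"
  shows "s * t / p = s / (p * c) + (- s) * (1 - c * t) / (p * c)"
  using assms by (simp add: field_simps)

lemma ob1_partial_sum_remainder:
  assumes x: "0 < x" "x < 1" "x \<notin> \<rat>"
  shows "x = (\<Sum>j<n. (-1)^j * recip_prod (ob1_digits x) j)
           + (-1)^n * ob1_tail x n / (\<Prod>i<n. real (ob1_digits x i))"
proof (induction n)
  case (Suc n)
  let ?c = "ob1_digits x" and ?P = "\<Prod>i<n. real (ob1_digits x i)"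
  have c_pos: "real (?c n) > 0"
    using admissible_digits_ge[OF admissible_ob1_digits[OF x], of n] by linarith
  have "?P > 0"
    using admissible_digits_prod_ge_1[OF admissible_ob1_digits[OF x], of n] by linarith
  from alternating_remainder_step[OF c_pos this, of "(-1)^n" "ob1_tail x n"]
  have "(-1)^n * ob1_tail x n / ?P
      = (-1)^n * recip_prod ?c n + (-1)^Suc n * ob1_tail x (Suc n) / (\<Prod>i<Suc n. real (?c i))"
    unfolding recip_prod_def by (simp add: ob1_digits_def mult.commute)
  with Suc show ?case
    by simp
qed simp

lemma ob1_digits_sums:
  assumes x: "0 < x" "x < 1" "x \<notin> \<rat>"
  shows "(\<lambda>k. (-1)^k * recip_prod (ob1_digits x) k) sums x"
proof -
  define rem where "rem n = (-1)^n * ob1_tail x n / (\<Prod>i<n. real (ob1_digits x i))" for n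
  have "norm (rem (Suc n)) \<le> recip_prod (ob1_digits x) n" for n
  proof -
    have P: "(\<Prod>i<Suc n. real (ob1_digits x i)) > 0"
      using admissible_digits_prod_ge_1[OF admissible_ob1_digits[OF x], of "Suc n"] by linarith
    have "norm (rem (Suc n)) = ob1_tail x (Suc n) / (\<Prod>i<Suc n. real (ob1_digits x i))"
      using ob1_tail_bounds[OF x, of "Suc n"] P
      unfolding rem_def by (simp add: abs_mult del: ob1_tail.simps prod.lessThan_Suc)
    also have "\<dots> \<le> recip_prod (ob1_digits x) n"
      using ob1_tail_bounds[OF x, of "Suc n"] P unfolding recip_prod_def
      by (intro divide_right_mono) (auto simp del: ob1_tail.simps prod.lessThan_Suc)
    finally show ?thesis .
  qed
  then have "(\<lambda>n. rem (Suc n)) \<longlonglongrightarrow> 0"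
    by (intro Lim_null_comparison[OF _ recip_prod_tendsto_zero[OF admissible_ob1_digits[OF x]]]) simp
  then have "(\<lambda>n. x - rem n) \<longlonglongrightarrow> x - 0"
    by (rule tendsto_diff[OF tendsto_const LIMSEQ_imp_Suc])
  moreover have "x - rem n = (\<Sum>j<n. (-1)^j * recip_prod (ob1_digits x) j)" for n
    using ob1_partial_sum_remainder[OF x, of n] unfolding rem_def by linarith
  ultimately show ?thesis
    unfolding sums_def by simp
qed

section \<open>Uniqueness of admissible expansions\<close>

lemma alternating_sum_strict_bounds:
  fixes a :: "nat \<Rightarrow> real"
  assumes "a \<longlonglongrightarrow> 0" and "\<And>n. 0 \<le> a n" and decr: "\<And>n. a (Suc n) < a n"
    and s: "(\<lambda>n. (-1)^n * a n) sums s"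
  shows "a 0 - a 1 < s" and "s < a 0"
proof -
  have "a (Suc n) \<le> a n" for n
    using decr[of n] by simp
  note leibniz = summable_Leibniz'[of a, OF assms(1,2) this]
  have s_eq: "s = (\<Sum>n. (-1)^n * a n)"
    using s by (simp add: sums_iff)
  have "a 0 - a 1 < a 0 - a 1 + a 2 - a 3"
    using decr[of 2] by (simp add: numeral_3_eq_3)
  also have "\<dots> = (\<Sum>i<2*2. (-1)^i * a i)"
    by (simp add: numeral_3_eq_3 numeral_2_eq_2)
  also have "\<dots> \<le> s"
    using leibniz(2)[of 2] s_eq by simp
  finally show "a 0 - a 1 < s" .
  have "s \<le> (\<Sum>i<2*1+1. (-1)^i * a i)"
    using leibniz(4)[of 1] s_eq by simp
  also have "\<dots> = a 0 - a 1 + a 2"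
    by (simp add: numeral_2_eq_2)
  also have "\<dots> < a 0"
    using decr[of 1] by (simp add: numeral_2_eq_2)
  finally show "s < a 0" .
qed

lemma first_digit_of_sum:
  assumes c: "admissible_digits c" and s: "(\<lambda>k. (-1)^k * recip_prod c k) sums z"
  shows "ob1_digit z = c 0"
proof -
  note bounds = alternating_sum_strict_bounds[OF recip_prod_tendsto_zero[OF c]
      less_imp_le[OF recip_prod_bounds(1)[OF c]] recip_prod_strict_decreasing[OF c] s]
  define a where "a = real (c 0)"
  have a: "a \<ge> 1" "real (c 1) \<ge> a + 1"
    using c strict_monoD[of c 0 1] unfolding admissible_digits_def a_def by auto
  have "1 / (a * real (c 1)) \<le> 1 / (a * (a + 1))"
    using a by (intro divide_left_mono mult_left_mono) auto
  moreover have "a + a * a > 0"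
    using a by (simp add: add_pos_pos)
  then have "1 / a - 1 / (a * (a + 1)) = 1 / (a + 1)"
    using a by (simp add: field_simps)
  ultimately have lower: "1 / (a + 1) < z"
    using bounds(1) unfolding recip_prod_def a_def by simp
  have upper: "z < 1 / a"
    using bounds(2) unfolding recip_prod_def a_def by simp
  have "0 < 1 / (a + 1)"
    using a by simp
  with lower have "0 < z"
    by linarith
  with lower upper a have "a < 1 / z" "1 / z < a + 1"
    by (simp_all add: field_simps)
  then have "\<lfloor>1 / z\<rfloor> = int (c 0)"
    unfolding a_def by (simp add: floor_eq_iff)
  then show ?thesis
    unfolding ob1_digit_def by simp
qed

lemma tail_of_sum:
  assumes c: "admissible_digits c" and s: "(\<lambda>k. (-1)^k * recip_prod c k) sums z"
  shows "(\<lambda>k. (-1)^k * recip_prod (\<lambda>j. c (Suc j)) k) sums (1 - real (c 0) * z)"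
proof -
  have c0: "real (c 0) > 0"
    using c unfolding admissible_digits_def by simp
  have shift: "- real (c 0) * ((-1)^Suc k * recip_prod c (Suc k))
      = (-1)^k * recip_prod (\<lambda>j. c (Suc j)) k" for k
    unfolding recip_prod_def using c0
    by (subst prod.lessThan_Suc_shift[of _ "Suc k"]) (simp add: field_simps)
  have "(\<lambda>k. (-1)^Suc k * recip_prod c (Suc k)) sums (z - recip_prod c 0)"
    using s by (subst sums_Suc_iff) simp
  then have "(\<lambda>k. - real (c 0) * ((-1)^Suc k * recip_prod c (Suc k)))
      sums (- real (c 0) * (z - recip_prod c 0))"
    by (rule sums_mult)
  moreover have "- real (c 0) * (z - recip_prod c 0) = 1 - real (c 0) * z"
    using c0 by (simp add: recip_prod_def field_simps)
  ultimately show ?thesis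
    unfolding shift by simp
qed

lemma admissible_digits_unique:
  assumes "admissible_digits c" and "(\<lambda>k. (-1)^k * recip_prod c k) sums z"
  shows "c = ob1_digits z"
proof
  fix k
  from assms show "c k = ob1_digits z k"
  proof (induction k arbitrary: c z)
    case 0
    then show ?case
      using first_digit_of_sum by (simp add: ob1_digits_def)
  next
    case (Suc k)
    then have "c (Suc k) = ob1_digits (1 - real (c 0) * z) k"
      using admissible_digits_tl tail_of_sum by blast
    then show ?case
      using first_digit_of_sum[OF Suc.prems] by (simp add: ob1_digits_Suc)
  qed
qed

section \<open>Symbols as gaps between digits\<close>

definition symbol_sums :: "(nat \<Rightarrow> nat) \<Rightarrow> nat \<Rightarrow> nat" where
  "symbol_sums g j = (\<Sum>i=1..Suc j. g i)"

fun digit_gaps :: "(nat \<Rightarrow> nat) \<Rightarrow> nat \<Rightarrow> nat" where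
  "digit_gaps c 0 = 0"
| "digit_gaps c (Suc 0) = c 0"
| "digit_gaps c (Suc (Suc k)) = c (Suc k) - c k"

lemma symbol_sums_Suc: "symbol_sums g (Suc j) = symbol_sums g j + g (Suc (Suc j))"
  by (simp add: symbol_sums_def)

lemma ob1_term_eq: "ob1_term g (Suc k) = (-1)^k * recip_prod (symbol_sums g) k"
  unfolding ob1_term_def recip_prod_def symbol_sums_def One_nat_def prod.atLeast1_atMost_eq
  by simp

lemma ob1_expansion_digits:
  assumes "ob1_expansion x g"
  shows "admissible_digits (symbol_sums g)"
    and "(\<lambda>k. (-1)^k * recip_prod (symbol_sums g) k) sums x"
proof -
  have pos: "\<And>k. k \<ge> 1 \<Longrightarrow> g k \<ge> 1"
    using assms unfolding ob1_expansion_def by auto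
  then have "strict_mono (symbol_sums g)"
    unfolding strict_mono_Suc_iff by (simp add: symbol_sums_Suc Suc_le_eq)
  with pos[of 1] show "admissible_digits (symbol_sums g)"
    unfolding admissible_digits_def by (simp add: symbol_sums_def)
  show "(\<lambda>k. (-1)^k * recip_prod (symbol_sums g) k) sums x"
    using assms unfolding ob1_expansion_def by (simp add: ob1_term_eq)
qed

lemma digit_gaps_symbol_sums:
  assumes "g 0 = 0"
  shows "digit_gaps (symbol_sums g) = g"
proof
  fix k
  show "digit_gaps (symbol_sums g) k = g k"
    using assms by (cases k; cases "k - 1") (auto simp: symbol_sums_Suc symbol_sums_def)
qed

lemma symbol_sums_digit_gaps:
  assumes "strict_mono c"
  shows "symbol_sums (digit_gaps c) = c"
proof
  fix j
  show "symbol_sums (digit_gaps c) j = c j"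
  proof (induction j)
    case (Suc j)
    then show ?case
      using strict_monoD[OF assms, of j "Suc j"] by (simp add: symbol_sums_Suc)
  qed (simp add: symbol_sums_def)
qed

lemma ob1_symbols_eq:
  assumes x: "0 < x" "x < 1" "x \<notin> \<rat>"
  shows "ob1_symbols x = digit_gaps (ob1_digits x)"
  unfolding ob1_symbols_def
proof (rule the_equality)
  note c = admissible_ob1_digits[OF x]
  have sums: "symbol_sums (digit_gaps (ob1_digits x)) = ob1_digits x"
    using c unfolding admissible_digits_def by (simp add: symbol_sums_digit_gaps)
  have "digit_gaps (ob1_digits x) k \<ge> 1" if "k \<ge> 1" for k
    using c that strict_monoD[of "ob1_digits x"] unfolding admissible_digits_def
    by (cases k; cases "k - 1") (auto simp: Suc_le_eq)
  then show "ob1_expansion x (digit_gaps (ob1_digits x))"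
    unfolding ob1_expansion_def using ob1_digits_sums[OF x] by (simp add: ob1_term_eq sums)
next
  fix g
  assume g: "ob1_expansion x g"
  then have "symbol_sums g = ob1_digits x"
    using admissible_digits_unique ob1_expansion_digits by blast
  with g show "g = digit_gaps (ob1_digits x)"
    using digit_gaps_symbol_sums unfolding ob1_expansion_def by metis
qed

section \<open>Rescaled digit dynamics\<close>

text \<open>
  The state \<open>(q, r)\<close> encodes the previous digit \<open>q\<close> and the current tail \<open>r / (q + 1)\<close>;
  \<open>gap_event i k q r\<close> says that \<open>k\<close> steps later the digit grows by exactly \<open>i\<close>.
\<close>

definition rescaled_digit :: "nat \<Rightarrow> real \<Rightarrow> nat" where
  "rescaled_digit q r = nat \<lfloor>(real q + 1) / r\<rfloor>"

definition rescaled_tail :: "nat \<Rightarrow> real \<Rightarrow> real" where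
  "rescaled_tail q r =
     (real (rescaled_digit q r) + 1) * (1 - real (rescaled_digit q r) * r / (real q + 1))"

fun gap_event :: "nat \<Rightarrow> nat \<Rightarrow> nat \<Rightarrow> real \<Rightarrow> bool" where
  "gap_event i 0 q r \<longleftrightarrow> rescaled_digit q r = q + i"
| "gap_event i (Suc k) q r \<longleftrightarrow> gap_event i k (rescaled_digit q r) (rescaled_tail q r)"

lemma rescaled_digit_eq: "rescaled_digit q r = ob1_digit (r / (real q + 1))"
  unfolding rescaled_digit_def ob1_digit_def by simp

lemma rescaled_tail_eq:
  "rescaled_tail q r / (real (rescaled_digit q r) + 1) =
     1 - real (ob1_digit (r / (real q + 1))) * (r / (real q + 1))"
proof -
  have "real (rescaled_digit q r) + 1 > 0"
    by simp
  then show ?thesis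
    unfolding rescaled_tail_def rescaled_digit_eq[symmetric] by simp
qed

lemma measurable_rescaled_digit [measurable]:
  "rescaled_digit q \<in> borel \<rightarrow>\<^sub>M count_space UNIV"
  unfolding rescaled_digit_def by measurable

lemma measurable_rescaled_tail [measurable]: "rescaled_tail q \<in> borel_measurable borel"
  unfolding rescaled_tail_def by measurable

lemma measurable_gap_event [measurable]: "Measurable.pred borel (gap_event i k q)"
proof (induction k arbitrary: q)
  case 0
  have "gap_event i 0 q = (\<lambda>r. rescaled_digit q r = q + i)"
    by (simp add: fun_eq_iff)
  then show ?case
    by simp
next
  case (Suc k)
  have "(\<lambda>r. gap_event i k m (rescaled_tail q r)) \<in> borel \<rightarrow>\<^sub>M count_space UNIV" for m
    using measurable_compose[OF measurable_rescaled_tail Suc.IH] .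
  then have "(\<lambda>r. gap_event i k (rescaled_digit q r) (rescaled_tail q r))
      \<in> borel \<rightarrow>\<^sub>M count_space UNIV"
    by (rule measurable_compose_countable[OF _ measurable_rescaled_digit])
  then show ?case
    by simp
qed

lemma gap_event_iff_ob1_digits:
  "gap_event i k q r \<longleftrightarrow>
     ob1_digits (r / (real q + 1)) k
       = (case k of 0 \<Rightarrow> q | Suc j \<Rightarrow> ob1_digits (r / (real q + 1)) j) + i"
proof (induction k arbitrary: q r)
  case 0
  then show ?case
    by (simp add: ob1_digits_def rescaled_digit_eq)
next
  case (Suc k)
  let ?z = "r / (real q + 1)"
  have shift: "ob1_digits (rescaled_tail q r / (real (rescaled_digit q r) + 1)) j
      = ob1_digits ?z (Suc j)" for j
    unfolding rescaled_tail_eq ob1_digits_Suc ..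
  have digit: "rescaled_digit q r = ob1_digits ?z 0"
    by (simp add: ob1_digits_def rescaled_digit_eq)
  show ?case
    using Suc.IH[of "rescaled_digit q r" "rescaled_tail q r", unfolded shift]
    by (cases k) (simp_all add: digit)
qed

lemma ob1_symbols_Suc_eq_iff:
  assumes x: "0 < x" "x < 1" "x \<notin> \<rat>"
  shows "ob1_symbols x (Suc k) = i \<longleftrightarrow> gap_event i k 0 x"
proof -
  have "(case k of 0 \<Rightarrow> 0 | Suc j \<Rightarrow> ob1_digits x j) \<le> ob1_digits x k"
    using strict_monoD[OF ob1_digits_strict_mono[OF x]] by (cases k) (auto intro!: less_imp_le)
  then show ?thesis
    unfolding ob1_symbols_eq[OF x] gap_event_iff_ob1_digits
    by (cases k) auto
qed

lemma rescaled_digit_bounds: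
  fixes q :: nat
  assumes r: "0 < r" "r \<le> 1"
  defines "m \<equiv> rescaled_digit q r"
  shows "Suc q \<le> m" and "(real q + 1) / (real m + 1) \<le> r" and "r \<le> (real q + 1) / real m"
proof -
  have "(real q + 1) * r \<le> real q + 1"
    using r by (simp add: mult_left_le)
  then have "(real q + 1) / r \<ge> real q + 1"
    using r by (simp add: le_divide_eq)
  then have fl: "\<lfloor>(real q + 1) / r\<rfloor> \<ge> int q + 1"
    by linarith
  then have m: "real m = real_of_int \<lfloor>(real q + 1) / r\<rfloor>"
    unfolding m_def rescaled_digit_def by (intro of_nat_nat) linarith
  show "Suc q \<le> m"
    using m fl by linarith
  then have "real m > 0"
    by simp
  moreover have "real m \<le> (real q + 1) / r" "(real q + 1) / r < real m + 1"
    using m by linarith+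
  ultimately show "(real q + 1) / (real m + 1) \<le> r" "r \<le> (real q + 1) / real m"
    using r by (simp_all add: field_simps)
qed

section \<open>Measure of the gap events\<close>

lemma emeasure_lborel_real_affine:
  fixes c t :: real
  assumes [measurable]: "A \<in> sets borel" and "c \<noteq> 0"
  shows "emeasure lborel A = ennreal \<bar>c\<bar> * emeasure lborel {x. t + c * x \<in> A}"
proof -
  have "emeasure lborel A = (\<integral>\<^sup>+x. indicator A x \<partial>lborel)"
    by simp
  also have "\<dots> = ennreal \<bar>c\<bar> * (\<integral>\<^sup>+x. indicator A (t + c * x) \<partial>lborel)"
    by (rule nn_integral_real_affine[OF _ assms(2)]) measurable
  also have "(\<integral>\<^sup>+x. indicator A (t + c * x) \<partial>lborel)
      = (\<integral>\<^sup>+x. indicator {x. t + c * x \<in> A} x \<partial>lborel)"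
    by (simp add: indicator_def)
  also have "\<dots> = emeasure lborel {x. t + c * x \<in> A}"
    by (rule nn_integral_indicator) measurable
  finally show ?thesis .
qed

text \<open>The length of the interval of \<open>r\<close> on which \<open>rescaled_digit q r = m\<close>.\<close>

definition branch_weight :: "nat \<Rightarrow> nat \<Rightarrow> real" where
  "branch_weight q m = (real q + 1) / (real m * (real m + 1))"

lemma emeasure_branch:
  fixes q m :: nat
  assumes [measurable]: "Measurable.pred borel P" and "m > 0"
  shows "emeasure lborel {r \<in> {(real q + 1) / (real m + 1) .. (real q + 1) / real m}.
            P ((real m + 1) * (1 - real m * r / (real q + 1)))}
       = ennreal (branch_weight q m) * emeasure lborel {s \<in> {0..1}. P s}"
proof -
  define Q M where "Q = real q + 1" and "M = real m"
  define k where "k = Q / (M * (M + 1))"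
  have pos: "Q > 0" "M > 0" "k > 0"
    using assms(2) unfolding Q_def M_def k_def by simp_all
  have Mk: "M * k = Q / (M + 1)"
    using pos(2) by (simp add: k_def)
  have image: "M * (Q / M + (- k) * s) = Q - Q / (M + 1) * s" for s
  proof -
    have "M * (Q / M + (- k) * s) = Q - (M * k) * s"
      using pos(2) by (simp add: algebra_simps)
    then show ?thesis
      unfolding Mk .
  qed
  have "(Q - Q / (M + 1) * s) / Q = 1 - s / (M + 1)" for s
    using pos(1) by (simp add: diff_divide_distrib)
  then have inverse: "(M + 1) * (1 - M * (Q / M + (- k) * s) / Q) = s" for s
    unfolding image using pos(2) by simp
  have "k = Q / M - Q / (M + 1)"
    using pos(1,2) unfolding k_def by (simp add: divide_simps) (simp add: algebra_simps)
  then have lower: "Q / (M + 1) = Q / M - k"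
    by simp
  have range: "Q / M + (- k) * s \<in> {Q / (M + 1) .. Q / M} \<longleftrightarrow> s \<in> {0..1}" for s
  proof -
    have "Q / M + (- k) * s \<le> Q / M \<longleftrightarrow> 0 \<le> k * s"
      by simp
    also have "\<dots> \<longleftrightarrow> 0 \<le> s"
      using pos(3) by (simp add: zero_le_mult_iff)
    finally have upper: "Q / M + (- k) * s \<le> Q / M \<longleftrightarrow> 0 \<le> s" .
    have "Q / M - k \<le> Q / M + (- k) * s \<longleftrightarrow> k * s \<le> k * 1"
      by simp
    also have "\<dots> \<longleftrightarrow> s \<le> 1"
      using pos(3) by (rule mult_le_cancel_left_pos)
    finally show ?thesis
      unfolding lower using upper by auto
  qed
  have preimage: "{s. Q / M + (- k) * s \<in> {r \<in> {Q / (M + 1) .. Q / M}. P ((M + 1) * (1 - M * r / Q))}}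
      = {s \<in> {0..1}. P s}"
    by (simp only: mem_Collect_eq inverse range)
  have "emeasure lborel {r \<in> {Q / (M + 1) .. Q / M}. P ((M + 1) * (1 - M * r / Q))}
      = ennreal \<bar>- k\<bar> * emeasure lborel {s \<in> {0..1}. P s}"
    unfolding preimage[symmetric] using pos(3) by (intro emeasure_lborel_real_affine) auto
  moreover have "\<bar>- k\<bar> = branch_weight q m"
    using pos unfolding k_def Q_def M_def branch_weight_def by simp
  ultimately show ?thesis
    unfolding Q_def M_def by simp
qed

lemma emeasure_rescaled_split:
  fixes q :: nat
  assumes [measurable]: "\<And>m. Measurable.pred borel (h m)"
  shows "emeasure lborel {r \<in> {0..1}. h (rescaled_digit q r) (rescaled_tail q r)}
       \<le> (\<Sum>n. ennreal (branch_weight q (Suc q + n)) * emeasure lborel {s \<in> {0..1}. h (Suc q + n) s})"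
proof -
  define B where "B m = {r \<in> {(real q + 1) / (real m + 1) .. (real q + 1) / real m}.
      h m ((real m + 1) * (1 - real m * r / (real q + 1)))}" for m
  have B_sets [measurable]: "B m \<in> sets lborel" for m
    unfolding B_def by measurable
  have "{r \<in> {0..1}. h (rescaled_digit q r) (rescaled_tail q r)} \<subseteq> {0} \<union> (\<Union>n. B (Suc q + n))"
  proof
    fix r
    assume r: "r \<in> {r \<in> {0..1}. h (rescaled_digit q r) (rescaled_tail q r)}"
    show "r \<in> {0} \<union> (\<Union>n. B (Suc q + n))"
    proof (cases "r = 0")
      case False
      let ?m = "rescaled_digit q r"
      have r': "0 < r" "r \<le> 1"
        using r False by auto
      have "r \<in> B ?m"
        using rescaled_digit_bounds(2,3)[OF r'] r unfolding B_def rescaled_tail_def by auto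
      moreover have "?m = Suc q + (?m - Suc q)"
        using rescaled_digit_bounds(1)[OF r', of q] by simp
      ultimately have "r \<in> B (Suc q + (?m - Suc q))"
        by simp
      then show ?thesis
        by blast
    qed simp
  qed
  then have "emeasure lborel {r \<in> {0..1}. h (rescaled_digit q r) (rescaled_tail q r)}
      \<le> emeasure lborel ({0} \<union> (\<Union>n. B (Suc q + n)))"
    by (intro emeasure_mono) measurable
  also have "\<dots> \<le> emeasure lborel {0::real} + emeasure lborel (\<Union>n. B (Suc q + n))"
    by (rule emeasure_subadditive) measurable
  also have "\<dots> \<le> (\<Sum>n. emeasure lborel (B (Suc q + n)))"
    using emeasure_subadditive_countably[of "\<lambda>n. B (Suc q + n)" lborel] B_sets by auto
  also have "\<dots> = (\<Sum>n. ennreal (branch_weight q (Suc q + n)) * emeasure lborel {s \<in> {0..1}. h (Suc q + n) s})"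
    unfolding B_def by (subst emeasure_branch) simp_all
  finally show ?thesis .
qed

lemma suminf_ennreal_le_telescope:
  fixes a f :: "nat \<Rightarrow> real"
  assumes nonneg: "\<And>n. 0 \<le> a n" and le: "\<And>n. a n \<le> f n - f (Suc n)" and "f \<longlonglongrightarrow> 0"
  shows "(\<Sum>n. ennreal (a n)) \<le> ennreal (f 0)"
proof -
  have tel: "(\<lambda>n. f n - f (Suc n)) sums f 0"
    using telescope_sums'[OF assms(3)] by simp
  have "(\<Sum>n. ennreal (a n)) \<le> (\<Sum>n. ennreal (f n - f (Suc n)))"
    using le by (intro suminf_le summableI ennreal_leI)
  also have "\<dots> = ennreal (\<Sum>n. f n - f (Suc n))"
    using nonneg le order_trans by (intro suminf_ennreal2 sums_summable[OF tel]) blast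
  also have "(\<Sum>n. f n - f (Suc n)) = f 0"
    using tel by (simp add: sums_iff)
  finally show ?thesis .
qed

lemma inverse_cube_le_telescope:
  fixes m :: real
  assumes "m > 0"
  shows "1 / (m * (m + 1)^2) \<le> (1 / m^2 - 1 / (m + 1)^2) / 2"
proof -
  have "(1 / m^2 - 1 / (m + 1)^2) / 2 - 1 / (m * (m + 1)^2) = 1 / (2 * m^2 * (m + 1)^2)"
    using assms by (simp add: divide_simps) (simp add: algebra_simps power2_eq_square)
  moreover have "1 / (2 * m^2 * (m + 1)^2) \<ge> 0"
    by simp
  ultimately show ?thesis
    by linarith
qed

lemma branch_weight_le: "m \<ge> Suc q \<Longrightarrow> branch_weight q m \<le> 1 / (real q + 1)"
  unfolding branch_weight_def
  by (rule order_trans[OF divide_left_mono[of "(real q + 1) * (real q + 1)"]]) (auto intro: mult_mono)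

lemma suminf_branch_weight_le:
  fixes c :: real
  assumes "c \<ge> 0"
  shows "(\<Sum>n. ennreal (branch_weight q (Suc q + n)) * ennreal (c / (real (Suc q + n) + 1)))
       \<le> ennreal (c / (2 * (real q + 1)))"
proof -
  define f where "f n = c * (real q + 1) / 2 / real (Suc q + n)^2" for n
  have "(\<Sum>n. ennreal (branch_weight q (Suc q + n)) * ennreal (c / (real (Suc q + n) + 1)))
      = (\<Sum>n. ennreal (branch_weight q (Suc q + n) * (c / (real (Suc q + n) + 1))))"
    by (intro suminf_cong ennreal_mult'[symmetric]) (simp add: branch_weight_def)
  also have "\<dots> \<le> ennreal (f 0)"
  proof (rule suminf_ennreal_le_telescope)
    fix n
    define m where "m = real (Suc q + n)"
    have "branch_weight q (Suc q + n) * (c / (real (Suc q + n) + 1))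
        = c * (real q + 1) * (1 / (m * (m + 1)^2))"
      unfolding branch_weight_def m_def by (simp add: power2_eq_square ac_simps)
    also have "\<dots> \<le> c * (real q + 1) * ((1 / m^2 - 1 / (m + 1)^2) / 2)"
      using assms by (intro mult_left_mono inverse_cube_le_telescope) (auto simp: m_def)
    also have "\<dots> = f n - f (Suc n)"
      unfolding f_def m_def by (simp add: field_simps)
    finally show "branch_weight q (Suc q + n) * (c / (real (Suc q + n) + 1)) \<le> f n - f (Suc n)" .
  next
    have "(\<lambda>n. c * (real q + 1) / 2 / real n ^ 2) \<longlonglongrightarrow> 0"
      by (intro tendsto_divide_0[OF tendsto_const] filterlim_at_top_imp_at_infinity
          filterlim_pow_at_top filterlim_real_sequentially) simp
    from LIMSEQ_ignore_initial_segment[OF this, of "Suc q"] show "f \<longlonglongrightarrow> 0"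
      unfolding f_def by (simp add: add.commute)
  qed (use assms in \<open>simp add: branch_weight_def\<close>)
  also have "f 0 = c / (2 * (real q + 1))"
  proof -
    define Q where "Q = real q + 1"
    have "Q \<noteq> 0" "real (Suc q + 0) = Q"
      unfolding Q_def by simp_all
    then show ?thesis
      unfolding f_def Q_def[symmetric] by (simp only: power2_eq_square) simp
  qed
  finally show ?thesis .
qed

lemma emeasure_first_gap_event_le:
  assumes "i \<ge> 1"
  shows "emeasure lborel {r \<in> {0..1}. gap_event i 0 q r} \<le> ennreal (1 / (real q + 1))"
proof -
  have const: "emeasure lborel {s \<in> {0..1::real}. b} = (if b then 1 else 0)" for b
  proof -
    have "{s \<in> {0..1::real}. b} = (if b then {0..1} else {})"
      by auto
    then show ?thesis
      by simp
  qed
  have "emeasure lborel {r \<in> {0..1}. gap_event i 0 q r}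
      \<le> (\<Sum>n. ennreal (branch_weight q (Suc q + n)) * (if Suc q + n = q + i then 1 else 0))"
    using emeasure_rescaled_split[of "\<lambda>m _. m = q + i" q] unfolding const by simp
  also have "\<dots> = (\<Sum>n\<in>{i - 1}. ennreal (branch_weight q (Suc q + n)) * (if Suc q + n = q + i then 1 else 0))"
    by (rule suminf_finite) (use assms in auto)
  also have "\<dots> = ennreal (branch_weight q (q + i))"
    using assms by simp
  also have "\<dots> \<le> ennreal (1 / (real q + 1))"
    using assms branch_weight_le[of q "q + i"] by (simp add: ennreal_leI)
  finally show ?thesis .
qed

lemma emeasure_gap_event_le:
  assumes "i \<ge> 1"
  shows "emeasure lborel {r \<in> {0..1}. gap_event i k q r} \<le> ennreal (1 / (2^k * (real q + 1)))"
proof (induction k arbitrary: q)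
  case 0
  then show ?case
    using emeasure_first_gap_event_le[OF assms] by simp
next
  case (Suc k)
  have "emeasure lborel {r \<in> {0..1}. gap_event i (Suc k) q r}
      \<le> (\<Sum>n. ennreal (branch_weight q (Suc q + n)) * emeasure lborel {s \<in> {0..1}. gap_event i k (Suc q + n) s})"
    using emeasure_rescaled_split[of "gap_event i k" q] by simp
  also have "\<dots> \<le> (\<Sum>n. ennreal (branch_weight q (Suc q + n)) * ennreal (1 / 2^k / (real (Suc q + n) + 1)))"
  proof (intro suminf_le summableI mult_left_mono)
    show "emeasure lborel {s \<in> {0..1}. gap_event i k (Suc q + n) s}
        \<le> ennreal (1 / 2^k / (real (Suc q + n) + 1))" for n
      using Suc.IH[of "Suc q + n"] by (simp only: divide_divide_eq_left)
  qed auto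
  also have "\<dots> \<le> ennreal (1 / 2^k / (2 * (real q + 1)))"
    by (rule suminf_branch_weight_le) simp
  also have "1 / 2^k / (2 * (real q + 1)) = 1 / (2^Suc k * (real q + 1))"
    by (simp add: field_simps)
  finally show ?case .
qed

lemma AE_finite_gap_events:
  assumes "i \<ge> 1"
  shows "AE x in lborel. x \<in> {0..1} \<longrightarrow> finite {k. gap_event i k 0 x}"
proof -
  define A where "A k = {r \<in> {0..1::real}. gap_event i k 0 r}" for k
  have A_sets [measurable]: "A k \<in> sets lborel" for k
    unfolding A_def by measurable
  have A_le: "emeasure lborel (A k) \<le> ennreal ((1/2)^k)" for k
    using emeasure_gap_event_le[OF assms, of k 0] unfolding A_def by (simp add: power_one_over)
  have A_finite: "emeasure lborel (A k) < \<infinity>" for k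
    using le_less_trans[OF A_le[of k] ennreal_less_top] by simp
  have "measure lborel (A k) \<le> (1/2)^k" for k
    using A_le[of k] A_finite[of k] by (simp add: emeasure_eq_ennreal_measure)
  then have "summable (\<lambda>k. measure lborel (A k))"
    by (intro summable_comparison_test'[OF summable_geometric[of "1/2"], of 0]) auto
  then have "AE x in lborel. eventually (\<lambda>k. x \<in> space lborel - A k) sequentially"
    by (rule borel_cantelli_AE1[OF A_sets A_finite])
  then show ?thesis
  proof (rule AE_mp, intro AE_I2 impI)
    fix x :: real
    assume "eventually (\<lambda>k. x \<in> space lborel - A k) sequentially" and x: "x \<in> {0..1}"
    then obtain N where "\<And>k. k \<ge> N \<Longrightarrow> x \<notin> A k"
      unfolding eventually_sequentially by auto
    with x have "{k. gap_event i k 0 x} \<subseteq> {..<N}"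
      unfolding A_def by (auto simp flip: not_le)
    then show "finite {k. gap_event i k 0 x}"
      by (rule finite_subset) simp
  qed
qed

lemma ob1_count_le_card_gap_events:
  assumes x: "0 < x" "x < 1" "x \<notin> \<rat>" and fin: "finite {k. gap_event i k 0 x}"
  shows "ob1_count i x n \<le> card {k. gap_event i k 0 x}"
proof -
  have "{k \<in> {1..n}. ob1_symbols x k = i} \<subseteq> Suc ` {k. gap_event i k 0 x}"
  proof
    fix k
    assume k: "k \<in> {k \<in> {1..n}. ob1_symbols x k = i}"
    then obtain j where "k = Suc j"
      by (cases k) auto
    with k show "k \<in> Suc ` {k. gap_event i k 0 x}"
      using ob1_symbols_Suc_eq_iff[OF x] by auto
  qed
  then have "ob1_count i x n \<le> card (Suc ` {k. gap_event i k 0 x})"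
    unfolding ob1_count_def using fin by (intro card_mono) auto
  also have "\<dots> = card {k. gap_event i k 0 x}"
    by (simp add: card_image)
  finally show ?thesis .
qed

theorem theorem6:
  shows "AE x in lborel. x \<in> {0<..<1} \<and> x \<notin> \<rat> \<longrightarrow>
           (\<forall>i::nat. i \<ge> 1 \<longrightarrow>
              limsup (\<lambda>n. ereal (real (ob1_count i x n))) < \<infinity>)"
proof -
  have "AE x in lborel. \<forall>i. i \<ge> 1 \<longrightarrow> x \<in> {0..1} \<longrightarrow> finite {k. gap_event i k 0 x}"
    unfolding AE_all_countable using AE_finite_gap_events by simp
  then show ?thesis
  proof (rule AE_mp, intro AE_I2 impI allI)
    fix x :: real and i :: nat
    assume "\<forall>i. i \<ge> 1 \<longrightarrow> x \<in> {0..1} \<longrightarrow> finite {k. gap_event i k 0 x}"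
      and "x \<in> {0<..<1} \<and> x \<notin> \<rat>" and "i \<ge> 1"
    then have "ob1_count i x n \<le> card {k. gap_event i k 0 x}" for n
      by (intro ob1_count_le_card_gap_events) auto
    then have "limsup (\<lambda>n. ereal (real (ob1_count i x n))) \<le> ereal (card {k. gap_event i k 0 x})"
      by (intro Limsup_bounded) auto
    then show "limsup (\<lambda>n. ereal (real (ob1_count i x n))) < \<infinity>"
      by (rule le_less_trans) simp
  qed
qed

end
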